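(* Let $n,m,k,t\ge 1$ and $r\ge 0$ be integers with $m=\lceil k/t\rceil + r$ and $n\ge tm$. Then the minimum total storage of an ${\sf ECBC}(n,m,k,t,r)$ is $$N(n,m,k,t,r)=m\bigl(n-t(m-r-1)\bigr)=tm(r+1)+m(n-tm).$$
   Context: An Erasure Combinatorial Batch Code ${\sf ECBC}(n,m,k,t,r)$ is a family of $m$ subsets $S_1,\dots,S_m$ (the contents of $m$ servers) of the file set $X=\{1,\dots,n\}$ such that for every subset $X'\subseteq X$ with $|X'|\le k$ and every subset $J\subseteq\{1,\dots,m\}$ with $|J|\ge m-r$, there exist subsets $C_j\subseteq S_j$ ($j\in J$) with $|C_j|\le t$ and $X'=\bigcup_{j\in J}C_j$. Its total storage is $N=\sum_{i=1}^m|S_i|$, and $N(n,m,k,t,r)$ denotes the minimum total storage over all ${\sf ECBC}(n,m,k,t,r)$. *)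

theory Defs
  imports Main
begin

text \<open>An ECBC(n,m,k,t,r): servers indexed by {0..<m}, server j stores S j \<subseteq> {1..n}.\<close>

definition ECBC :: "nat \<Rightarrow> nat \<Rightarrow> nat \<Rightarrow> nat \<Rightarrow> nat \<Rightarrow> (nat \<Rightarrow> nat set) \<Rightarrow> bool" where
  "ECBC n m k t r S \<longleftrightarrow>
     (\<forall>i<m. S i \<subseteq> {1..n}) \<and>
     (\<forall>X' J. X' \<subseteq> {1..n} \<and> card X' \<le> k \<and> J \<subseteq> {0..<m} \<and> card J \<ge> m - r \<longrightarrow>
        (\<exists>C. (\<forall>j\<in>J. C j \<subseteq> S j \<and> card (C j) \<le> t) \<and> X' = (\<Union>j\<in>J. C j)))"

definition storage :: "nat \<Rightarrow> (nat \<Rightarrow> nat set) \<Rightarrow> nat" where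
  "storage m S = (\<Sum>i<m. card (S i))"

definition min_storage :: "nat \<Rightarrow> nat \<Rightarrow> nat \<Rightarrow> nat \<Rightarrow> nat \<Rightarrow> nat" where
  "min_storage n m k t r = (LEAST N. \<exists>S. ECBC n m k t r S \<and> storage m S = N)"

end

theory Submission
  imports Defs
begin

text \<open>Lower bound: if server \<open>i\<close> missed \<open>t(m-r-1)+1\<close> files, a request for these files addressed
  to \<open>i\<close> and \<open>m-r-1\<close> further servers could not be served, since \<open>i\<close> contributes nothing and the
  others at most \<open>t\<close> files each. Hence every server stores at least \<open>n - t(m-r-1)\<close> files.

  Upper bound: split the first \<open>tm\<close> files into \<open>m\<close> blocks of \<open>t\<close> files, store block \<open>b\<close> on
  the servers \<open>b, \<dots>, b + r\<close> modulo \<open>m\<close> and the remaining files on every server. A request \<open>Z\<close>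
  meeting \<open>p\<close> blocks reaches at least \<open>min p |J|\<close> available servers, because the windows of
  the \<open>p\<close> blocks cover all of \<open>\<int>/m\<close> or at least \<open>p + r\<close> residues, of which at most \<open>r\<close> are
  unavailable. A version of Hall's theorem in which every server may serve \<open>t\<close> files then
  distributes the request.\<close>

definition hall_condition :: "'a set \<Rightarrow> ('a \<Rightarrow> 'b set) \<Rightarrow> bool" where
  "hall_condition X N \<longleftrightarrow> (\<forall>Z\<subseteq>X. card Z \<le> card (\<Union>(N ` Z)))"

lemma hall_condition_remove_tight_set:
  assumes fin: "finite X" "\<forall>x\<in>X. finite (N x)"
    and hall: "hall_condition X N" and Z: "Z \<subseteq> X" "card (\<Union>(N ` Z)) \<le> card Z"
  shows "hall_condition (X - Z) (\<lambda>x. N x - \<Union>(N ` Z))"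
  unfolding hall_condition_def
proof (intro allI impI)
  fix W assume W: "W \<subseteq> X - Z"
  let ?U = "\<Union>(N ` Z)" and ?V = "\<Union>x\<in>W. N x - \<Union>(N ` Z)"
  have fin_W: "finite W" and fin_Z: "finite Z" using W Z fin(1) finite_subset by blast+
  have fin_U: "finite ?U" using Z fin(2) fin_Z by auto
  have fin_V: "finite ?V" using W fin(2) fin_W by (intro finite_UN_I finite_Diff) auto
  have "card W + card Z = card (W \<union> Z)"
    using W fin_W fin_Z by (subst card_Un_disjoint) auto
  also have "\<dots> \<le> card (\<Union>(N ` (W \<union> Z)))"
    using hall W Z unfolding hall_condition_def by (metis Diff_subset Un_subset_iff subset_trans)
  also have "\<dots> \<le> card (?V \<union> ?U)"
    using fin_U fin_V by (intro card_mono) auto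
  also have "\<dots> \<le> card ?V + card ?U" by (rule card_Un_le)
  finally show "card W \<le> card ?V" using Z(2) by linarith
qed

lemma hall_condition_remove_point:
  assumes fin: "finite X" "\<forall>x\<in>X. finite (N x)"
    and surplus: "\<forall>Z\<subseteq>X. Z \<noteq> {} \<longrightarrow> card Z < card (\<Union>(N ` Z))"
  shows "hall_condition X (\<lambda>x. N x - {y})"
  unfolding hall_condition_def
proof (intro allI impI)
  fix Z assume Z: "Z \<subseteq> X"
  show "card Z \<le> card (\<Union>x\<in>Z. N x - {y})"
  proof (cases "Z = {}")
    case False
    have fin_V: "finite (\<Union>x\<in>Z. N x - {y})" using Z fin finite_subset by blast
    have "card Z < card (\<Union>(N ` Z))" using surplus Z False by blast
    also have "\<dots> \<le> card (insert y (\<Union>x\<in>Z. N x - {y}))"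
      using fin_V by (intro card_mono) auto
    also have "\<dots> = Suc (card (\<Union>x\<in>Z. N x - {y}))"
      using fin_V by (intro card_insert_disjoint) auto
    finally show ?thesis by simp
  qed simp
qed

theorem hall_marriage:
  assumes "finite X" "\<forall>x\<in>X. finite (N x)" "hall_condition X N"
  shows "\<exists>f. inj_on f X \<and> (\<forall>x\<in>X. f x \<in> N x)"
  using assms
proof (induction "card X" arbitrary: X N rule: less_induct)
  case less
  note fin = less.prems(1,2) and hall = less.prems(3)
  show ?case
  proof (cases "\<exists>Z. Z \<subseteq> X \<and> Z \<noteq> {} \<and> Z \<noteq> X \<and> card (\<Union>(N ` Z)) \<le> card Z")
    case True
    then obtain Z where Z: "Z \<subseteq> X" "Z \<noteq> {}" "Z \<noteq> X" "card (\<Union>(N ` Z)) \<le> card Z"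
      by blast
    let ?U = "\<Union>(N ` Z)"
    have "card Z < card X" "card (X - Z) < card X"
      using Z fin(1) by (auto intro: psubset_card_mono simp: finite_subset)
    moreover have "hall_condition Z N"
      using hall Z(1) by (auto simp: hall_condition_def)
    moreover have "hall_condition (X - Z) (\<lambda>x. N x - ?U)"
      using hall_condition_remove_tight_set[OF fin hall Z(1,4)] .
    moreover have "finite Z" "\<forall>x\<in>Z. finite (N x)" "finite (X - Z)"
      "\<forall>x\<in>X - Z. finite (N x - ?U)"
      using fin Z(1) finite_subset by auto
    ultimately obtain f g where f: "inj_on f Z" "\<forall>x\<in>Z. f x \<in> N x"
      and g: "inj_on g (X - Z)" "\<forall>x\<in>X - Z. g x \<in> N x - ?U"
      using less.hyps[of Z N] less.hyps[of "X - Z" "\<lambda>x. N x - ?U"] by blast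
    define h where "h x = (if x \<in> Z then f x else g x)" for x
    have "h ` Z \<subseteq> ?U" "h ` (X - Z) \<inter> ?U = {}" using f g by (auto simp: h_def)
    then have "inj_on h (Z \<union> (X - Z))"
      using f g by (auto simp: inj_on_Un inj_on_def h_def)
    moreover have "\<forall>x\<in>X. h x \<in> N x" using f g by (auto simp: h_def)
    moreover have "Z \<union> (X - Z) = X" using Z(1) by blast
    ultimately show ?thesis by metis
  next
    case False
    show ?thesis
    proof (cases "X = {}")
      case nonempty: False
      then obtain x where x: "x \<in> X" by blast
      have "card {x} \<le> card (N x)" using hall x by (auto simp: hall_condition_def)
      then obtain y where y: "y \<in> N x" by fastforce
      have "\<forall>Z\<subseteq>X - {x}. Z \<noteq> {} \<longrightarrow> card Z < card (\<Union>(N ` Z))"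
        using False x by (auto simp: not_le)
      then have "hall_condition (X - {x}) (\<lambda>z. N z - {y})"
        using fin by (intro hall_condition_remove_point) auto
      moreover have "card (X - {x}) < card X" using fin(1) x by (rule card_Diff1_less)
      moreover have "finite (X - {x})" "\<forall>z\<in>X - {x}. finite (N z - {y})" using fin by auto
      ultimately obtain f where f: "inj_on f (X - {x})" "\<forall>z\<in>X - {x}. f z \<in> N z - {y}"
        using less.hyps[of "X - {x}" "\<lambda>z. N z - {y}"] by blast
      have "inj_on (f(x := y)) (insert x (X - {x}))"
        using f by (auto simp: inj_on_def)
      moreover have "\<forall>z\<in>X. (f(x := y)) z \<in> N z" using f y by auto
      ultimately show ?thesis using x by (metis insert_Diff)
    qed simp
  qed
qed

lemma hall_capacitated:
  fixes S :: "'j \<Rightarrow> 'a set"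
  assumes fin: "finite X" "finite J"
    and hall: "\<forall>Z\<subseteq>X. card Z \<le> t * card {j\<in>J. S j \<inter> Z \<noteq> {}}"
  shows "\<exists>C. (\<forall>j\<in>J. C j \<subseteq> S j \<and> card (C j) \<le> t) \<and> X = (\<Union>j\<in>J. C j)"
proof -
  \<comment> \<open>Replace every server by \<open>t\<close> slots and match files to slots.\<close>
  define N where "N x = {j\<in>J. x \<in> S j} \<times> {..<t}" for x
  have "\<Union>(N ` Z) = {j\<in>J. S j \<inter> Z \<noteq> {}} \<times> {..<t}" for Z
    by (auto simp: N_def)
  then have "hall_condition X N"
    using hall by (simp add: hall_condition_def card_cartesian_product mult.commute)
  moreover have "\<forall>x\<in>X. finite (N x)" using fin(2) by (simp add: N_def)
  ultimately obtain f where f: "inj_on f X" "\<forall>x\<in>X. f x \<in> N x"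
    using hall_marriage fin(1) by blast
  define C where "C j = {x\<in>X. fst (f x) = j}" for j
  have "card (C j) \<le> t" if "j \<in> J" for j
  proof -
    have "inj_on f (C j)" using f(1) by (rule inj_on_subset) (auto simp: C_def)
    then have "card (C j) = card (f ` C j)" by (simp add: card_image)
    also have "\<dots> \<le> card ({j} \<times> {..<t})"
      using f(2) by (intro card_mono) (auto simp: C_def N_def)
    finally show ?thesis by (simp add: card_cartesian_product)
  qed
  moreover have "\<forall>j\<in>J. C j \<subseteq> S j" "X = (\<Union>j\<in>J. C j)"
    using f(2) by (fastforce simp: C_def N_def)+
  ultimately show ?thesis by blast
qed

lemma card_le_mult_card_image:
  assumes "finite Z" "\<And>y. card {x\<in>Z. g x = y} \<le> t"
  shows "card Z \<le> t * card (g ` Z)"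
proof -
  have "Z = (\<Union>y\<in>g ` Z. {x\<in>Z. g x = y})" by blast
  then have "card Z \<le> (\<Sum>y\<in>g ` Z. card {x\<in>Z. g x = y})"
    using card_UN_le[of "g ` Z"] assms(1) by (metis finite_imageI)
  also have "\<dots> \<le> t * card (g ` Z)"
    using sum_bounded_above[of "g ` Z" "\<lambda>y. card {x\<in>Z. g x = y}" t] assms(2) by (simp add: mult.commute)
  finally show ?thesis .
qed

definition cyc_succ :: "nat \<Rightarrow> nat \<Rightarrow> nat" where
  "cyc_succ m a = (if Suc a = m then 0 else Suc a)"

definition cyc_diff :: "nat \<Rightarrow> nat \<Rightarrow> nat \<Rightarrow> nat" where
  "cyc_diff m s b = (if b \<le> s then s - b else s + m - b)"

text \<open>The sumset \<open>P + {0..d}\<close> in \<open>\<int>/m\<close>.\<close>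
definition cyc_window :: "nat \<Rightarrow> nat \<Rightarrow> nat set \<Rightarrow> nat set" where
  "cyc_window m d P = {s. s < m \<and> (\<exists>b\<in>P. cyc_diff m s b \<le> d)}"

lemma cyc_diff_self [simp]: "cyc_diff m s s = 0"
  by (simp add: cyc_diff_def)

lemma cyc_succ_closed_eq_all:
  assumes A: "A \<subseteq> {0..<m}" "A \<noteq> {}" and closed: "\<forall>a\<in>A. cyc_succ m a \<in> A"
  shows "A = {0..<m}"
proof -
  have up: "a + i \<in> A" if "a \<in> A" "a + i < m" for a i
    using that by (induction i) (use closed in \<open>auto simp: cyc_succ_def\<close>)
  obtain a where a: "a \<in> A" using A(2) by blast
  then have "a < m" using A(1) by auto
  then have "m - 1 \<in> A" using up[OF a, of "m - 1 - a"] by simp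
  then have "cyc_succ m (m - 1) \<in> A" using closed by blast
  then have "0 \<in> A" using \<open>a < m\<close> by (simp add: cyc_succ_def)
  then show ?thesis using up[of 0] A(1) by fastforce
qed

lemma card_cyc_window:
  assumes P: "P \<subseteq> {0..<m}" "P \<noteq> {}"
  shows "cyc_window m d P = {0..<m} \<or> card P + d \<le> card (cyc_window m d P)"
proof (induction d)
  case 0
  have "cyc_window m 0 P = P" using P(1) by (auto simp: cyc_window_def cyc_diff_def)
  then show ?case by simp
next
  case (Suc d)
  let ?A = "cyc_window m d P" and ?B = "cyc_window m (Suc d) P"
  have AB: "?A \<subseteq> ?B" unfolding cyc_window_def using le_SucI by blast
  have A: "?A \<subseteq> {0..<m}" and B: "?B \<subseteq> {0..<m}" by (auto simp: cyc_window_def)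
  show ?case
  proof (cases "?B = {0..<m}")
    case False
    then have "?A \<noteq> {0..<m}" using AB B by blast
    then have IH: "card P + d \<le> card ?A" using Suc.IH by blast
    have "P \<subseteq> ?A" using P(1) by (force simp: cyc_window_def)
    then obtain a where a: "a \<in> ?A" "cyc_succ m a \<notin> ?A"
      using cyc_succ_closed_eq_all[OF A] P(2) \<open>?A \<noteq> {0..<m}\<close> by blast
    from a(1) obtain b where b: "b \<in> P" "a < m" "cyc_diff m a b \<le> d"
      by (auto simp: cyc_window_def)
    moreover have "b < m" using b(1) P(1) by auto
    ultimately have "cyc_succ m a < m" "cyc_diff m (cyc_succ m a) b \<le> Suc d"
      by (auto simp: cyc_diff_def cyc_succ_def split: if_splits)
    then have "cyc_succ m a \<in> ?B" using b(1) by (auto simp: cyc_window_def)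
    then have "card (insert (cyc_succ m a) ?A) \<le> card ?B"
      using AB B by (intro card_mono) (auto intro: finite_subset)
    then show ?thesis using IH a(2) A by (simp add: finite_subset)
  qed simp
qed

lemma card_Int_cyc_window:
  assumes P: "P \<subseteq> {0..<m}" and J: "J \<subseteq> {0..<m}" "m - d \<le> card J"
  shows "min (card P) (card J) \<le> card (J \<inter> cyc_window m d P)"
proof (cases "P = {} \<or> cyc_window m d P = {0..<m}")
  case True
  then show ?thesis using J(1) by (auto simp: Int_absorb2)
next
  case False
  let ?W = "cyc_window m d P"
  have W: "?W \<subseteq> {0..<m}" by (auto simp: cyc_window_def)
  then have "finite ?W" by (rule finite_subset) simp
  have "card P + d \<le> card ?W" using card_cyc_window[OF P] False by blast
  also have "\<dots> \<le> card ((J \<inter> ?W) \<union> ({0..<m} - J))"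
    using W \<open>finite ?W\<close> by (intro card_mono) auto
  also have "\<dots> \<le> card (J \<inter> ?W) + card ({0..<m} - J)"
    by (rule card_Un_le)
  also have "card ({0..<m} - J) = m - card J"
    using J(1) by (simp add: card_Diff_subset finite_subset)
  finally show ?thesis using J(2) by linarith
qed

lemma card_cyc_diff_le:
  assumes "s < m"
  shows "card {b. b < m \<and> cyc_diff m s b \<le> d} \<le> Suc d"
proof -
  let ?B = "{b. b < m \<and> cyc_diff m s b \<le> d}"
  have "inj_on (cyc_diff m s) ?B"
    using assms by (auto simp: inj_on_def cyc_diff_def split: if_splits)
  then have "card ?B = card (cyc_diff m s ` ?B)" by (simp add: card_image)
  also have "\<dots> \<le> card {0..d}" by (intro card_mono) auto
  finally show ?thesis by simp
qed

definition block :: "nat \<Rightarrow> nat \<Rightarrow> nat" where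
  "block t f = (f - 1) div t"

lemma block_bounds:
  assumes "t \<ge> 1" "f \<ge> 1"
  shows "block t f * t < f" "f \<le> block t f * t + t"
proof -
  have "block t f * t + (f - 1) mod t = f - 1" by (simp add: block_def)
  moreover have "(f - 1) mod t < t" using assms(1) by simp
  ultimately show "block t f * t < f" "f \<le> block t f * t + t" using assms(2) by linarith+
qed

lemma block_less:
  assumes "t \<ge> 1" "1 \<le> f" "f \<le> t * m"
  shows "block t f < m"
  using assms by (auto simp: block_def less_mult_imp_div_less mult.commute)

lemma card_le_mult_card_blocks:
  assumes "t \<ge> 1" "finite Z" "0 \<notin> Z"
  shows "card Z \<le> t * card (block t ` Z)"
proof (rule card_le_mult_card_image[OF assms(2)])
  fix b
  have "{f\<in>Z. block t f = b} \<subseteq> {b * t + 1 .. b * t + t}"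
  proof
    fix f assume f: "f \<in> {f\<in>Z. block t f = b}"
    then have "f \<ge> 1" using assms(3) by (cases f) auto
    then show "f \<in> {b * t + 1 .. b * t + t}" using block_bounds[OF assms(1) \<open>f \<ge> 1\<close>] f by auto
  qed
  then have "card {f\<in>Z. block t f = b} \<le> card {b * t + 1 .. b * t + t}"
    by (intro card_mono) auto
  then show "card {f\<in>Z. block t f = b} \<le> t" by simp
qed

text \<open>Files \<open>1..t*m\<close> form \<open>m\<close> blocks of \<open>t\<close> consecutive files; block \<open>b\<close> is stored on the
  \<open>r + 1\<close> servers \<open>b, b + 1, \<dots>, b + r\<close> modulo \<open>m\<close>.\<close>
definition cyclic_code :: "nat \<Rightarrow> nat \<Rightarrow> nat \<Rightarrow> nat \<Rightarrow> nat \<Rightarrow> nat set" where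
  "cyclic_code n m t r s = {f\<in>{1..n}. t * m < f \<or> cyc_diff m s (block t f) \<le> r}"

lemma card_cyclic_code:
  assumes "t \<ge> 1" "s < m"
  shows "card (cyclic_code n m t r s) \<le> (n - t * m) + t * (r + 1)"
proof -
  let ?Y = "{f\<in>{1..t * m}. cyc_diff m s (block t f) \<le> r}"
  have "block t ` ?Y \<subseteq> {b. b < m \<and> cyc_diff m s b \<le> r}"
    using block_less[OF assms(1)] by auto
  then have "card (block t ` ?Y) \<le> card {b. b < m \<and> cyc_diff m s b \<le> r}"
    by (intro card_mono) auto
  then have "card (block t ` ?Y) \<le> r + 1"
    using card_cyc_diff_le[OF assms(2), of r] by simp
  moreover have "card ?Y \<le> t * card (block t ` ?Y)"
    by (rule card_le_mult_card_blocks[OF assms(1)]) auto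
  ultimately have Y: "card ?Y \<le> t * (r + 1)"
    by (meson le_trans mult_le_mono2)
  have "card (cyclic_code n m t r s) \<le> card ({t * m <.. n} \<union> ?Y)"
    by (intro card_mono) (auto simp: cyclic_code_def)
  also have "\<dots> \<le> card {t * m <.. n} + card ?Y" by (rule card_Un_le)
  finally show ?thesis using Y by simp
qed

lemma cyclic_code_hall_condition:
  assumes t: "t \<ge> 1" and n: "t * m \<le> n" and k: "k \<le> t * (m - r)"
    and Z: "Z \<subseteq> {1..n}" "card Z \<le> k" and J: "J \<subseteq> {0..<m}" "m - r \<le> card J"
  shows "card Z \<le> t * card {j\<in>J. cyclic_code n m t r j \<inter> Z \<noteq> {}}"
    (is "_ \<le> t * card ?H")
proof -
  have "finite J" using J(1) finite_subset by blast
  then have "finite ?H" by simp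
  have ZJ: "card Z \<le> t * card J" using Z(2) k J(2) by (meson le_trans mult_le_mono2)
  show ?thesis
  proof (cases "\<exists>f\<in>Z. t * m < f")
    case True
    then obtain f where "f \<in> Z" "t * m < f" by blast
    moreover have "f \<in> {1..n}" using Z(1) \<open>f \<in> Z\<close> by blast
    ultimately have "f \<in> cyclic_code n m t r j" for j by (simp add: cyclic_code_def)
    then have "?H = J" using \<open>f \<in> Z\<close> by blast
    then show ?thesis using ZJ by simp
  next
    case False
    let ?P = "block t ` Z"
    have Zm: "Z \<subseteq> {1..t * m}" using False Z(1) by force
    then have "?P \<subseteq> {0..<m}" using block_less[OF t] by auto
    moreover have "J \<inter> cyc_window m r ?P \<subseteq> ?H"
    proof
      fix s assume "s \<in> J \<inter> cyc_window m r ?P"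
      then obtain f where "s \<in> J" "f \<in> Z" "cyc_diff m s (block t f) \<le> r"
        by (auto simp: cyc_window_def)
      moreover have "f \<in> {1..n}" using Z(1) \<open>f \<in> Z\<close> by blast
      ultimately show "s \<in> ?H" by (auto simp: cyclic_code_def)
    qed
    ultimately have "min (card ?P) (card J) \<le> card ?H"
      using card_Int_cyc_window[OF _ J] card_mono[OF \<open>finite ?H\<close>] by (meson le_trans)
    moreover have "card Z \<le> t * card ?P"
      using Zm by (intro card_le_mult_card_blocks[OF t]) (auto intro: finite_subset)
    ultimately show ?thesis using ZJ by (cases "card ?P \<le> card J") (auto simp: min_def intro: le_trans)
  qed
qed

lemma ECBC_cyclic_code:
  assumes "t \<ge> 1" "t * m \<le> n" "k \<le> t * (m - r)"
  shows "ECBC n m k t r (cyclic_code n m t r)"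
  unfolding ECBC_def
proof (intro conjI allI impI)
  fix X J assume XJ: "X \<subseteq> {1..n} \<and> card X \<le> k \<and> J \<subseteq> {0..<m} \<and> m - r \<le> card J"
  have "finite X" "finite J" using XJ finite_subset by auto
  moreover have "\<forall>Z\<subseteq>X. card Z \<le> t * card {j\<in>J. cyclic_code n m t r j \<inter> Z \<noteq> {}}"
  proof (intro allI impI)
    fix Z assume "Z \<subseteq> X"
    then have "Z \<subseteq> {1..n}" "card Z \<le> k" using XJ card_mono[OF \<open>finite X\<close>] le_trans by blast+
    then show "card Z \<le> t * card {j\<in>J. cyclic_code n m t r j \<inter> Z \<noteq> {}}"
      using cyclic_code_hall_condition[OF assms] XJ by blast
  qed
  ultimately show "\<exists>C. (\<forall>j\<in>J. C j \<subseteq> cyclic_code n m t r j \<and> card (C j) \<le> t) \<and> X = (\<Union>j\<in>J. C j)"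
    by (rule hall_capacitated)
qed (auto simp: cyclic_code_def)

lemma ECBC_card_server_ge:
  assumes E: "ECBC n m k t r S" and i: "i < m" and r: "r < m" and k: "t * (m - r - 1) < k"
  shows "n - t * (m - r - 1) \<le> card (S i)"
proof (rule ccontr)
  have S: "\<forall>j<m. S j \<subseteq> {1..n}" using E by (simp add: ECBC_def)
  assume "\<not> ?thesis"
  moreover have Si: "S i \<subseteq> {1..n}" using S i by blast
  then have "card ({1..n} - S i) = n - card (S i)"
    using card_Diff_subset[OF finite_subset[OF Si]] by simp
  ultimately have "t * (m - r - 1) + 1 \<le> card ({1..n} - S i)" by linarith
  then obtain X where X: "X \<subseteq> {1..n} - S i" "card X = t * (m - r - 1) + 1"
    by (meson obtain_subset_with_card_n)
  have "m - r - 1 \<le> card ({0..<m} - {i})" using i by simp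
  then obtain K where K: "K \<subseteq> {0..<m} - {i}" "card K = m - r - 1"
    by (meson obtain_subset_with_card_n)
  have "finite K" "i \<notin> K" using K(1) finite_subset by auto
  then have "card (insert i K) = m - r" using K(2) r by simp
  then have "X \<subseteq> {1..n} \<and> card X \<le> k \<and> insert i K \<subseteq> {0..<m} \<and> m - r \<le> card (insert i K)"
    using X K(1) i k by auto
  then obtain C where C: "\<forall>j\<in>insert i K. C j \<subseteq> S j \<and> card (C j) \<le> t"
    and XC: "X = (\<Union>j\<in>insert i K. C j)"
    using E unfolding ECBC_def by blast
  have "X \<subseteq> (\<Union>j\<in>K. C j)" using X(1) C XC by blast
  moreover have "finite (C j)" if "j \<in> K" for j
  proof -
    have "j < m" using K(1) that by auto
    then have "C j \<subseteq> {1..n}" using C S that by blast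
    then show ?thesis by (rule finite_subset) simp
  qed
  ultimately have "card X \<le> card (\<Union>j\<in>K. C j)"
    using \<open>finite K\<close> by (intro card_mono) auto
  also have "\<dots> \<le> (\<Sum>j\<in>K. card (C j))" by (rule card_UN_le[OF \<open>finite K\<close>])
  also have "\<dots> \<le> t * card K"
    using C sum_bounded_above[of K "\<lambda>j. card (C j)" t] by (simp add: mult.commute)
  finally show False using X(2) K(2) by simp
qed

lemma storage_ECBC_ge:
  assumes "ECBC n m k t r S" "r < m" "t * (m - r - 1) < k"
  shows "m * (n - t * (m - r - 1)) \<le> storage m S"
proof -
  have "(\<Sum>i<m. n - t * (m - r - 1)) \<le> (\<Sum>i<m. card (S i))"
    using ECBC_card_server_ge[OF assms(1) _ assms(2,3)] by (intro sum_mono) simp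
  then show ?thesis by (simp add: storage_def)
qed

lemma storage_cyclic_code_le:
  assumes "t \<ge> 1"
  shows "storage m (cyclic_code n m t r) \<le> m * ((n - t * m) + t * (r + 1))"
proof -
  have "(\<Sum>i<m. card (cyclic_code n m t r i)) \<le> (\<Sum>i<m. (n - t * m) + t * (r + 1))"
    using card_cyclic_code[OF assms] by (intro sum_mono) simp
  then show ?thesis by (simp add: storage_def)
qed

lemma min_storage_eqI:
  assumes "ECBC n m k t r S" "storage m S \<le> N"
    and "\<And>S'. ECBC n m k t r S' \<Longrightarrow> N \<le> storage m S'"
  shows "min_storage n m k t r = N"
  unfolding min_storage_def
proof (rule Least_equality)
  show "\<exists>S. ECBC n m k t r S \<and> storage m S = N"
    using assms by (metis le_antisym)
qed (use assms(3) in blast)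

lemma ceiling_div_bounds:
  fixes k t :: nat
  assumes "t \<ge> 1" "k \<ge> 1"
  shows "k \<le> t * ((k + t - 1) div t)" "t * ((k + t - 1) div t - 1) < k"
proof -
  let ?q = "(k + t - 1) div t"
  have "t * ?q + (k + t - 1) mod t = k + t - 1" by simp
  moreover have "(k + t - 1) mod t < t" using assms(1) by simp
  moreover have "t * (?q - 1) = t * ?q - t" by (simp add: diff_mult_distrib2)
  ultimately show "k \<le> t * ?q" "t * (?q - 1) < k" using assms by linarith+
qed

theorem theorem6:
  fixes n m k t r :: nat
  assumes "n \<ge> 1" and "m \<ge> 1" and "k \<ge> 1" and "t \<ge> 1"
    and "m = (k + t - 1) div t + r"
    and "n \<ge> t * m"
  shows "min_storage n m k t r = m * (n - t * (m - r - 1)) \<and>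
         min_storage n m k t r = t * m * (r + 1) + m * (n - t * m)"
proof -
  have q: "m - r = (k + t - 1) div t" using assms(5) by simp
  have k_le: "k \<le> t * (m - r)" and k_gt: "t * (m - r - 1) < k"
    using ceiling_div_bounds[OF assms(4,3)] unfolding q by simp_all
  then have "r < m" using assms(3) by (cases "m - r") auto
  then have m_split: "m = (m - r - 1) + (r + 1)" by simp
  have "t * m = t * (m - r - 1) + t * (r + 1)"
    by (subst (1) m_split) (simp only: add_mult_distrib2)
  then have per_server: "n - t * (m - r - 1) = (n - t * m) + t * (r + 1)"
    using assms(6) by linarith
  have "min_storage n m k t r = m * (n - t * (m - r - 1))"
  proof (rule min_storage_eqI)
    show "ECBC n m k t r (cyclic_code n m t r)"
      using ECBC_cyclic_code[OF assms(4,6) k_le] .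
    show "storage m (cyclic_code n m t r) \<le> m * (n - t * (m - r - 1))"
      using storage_cyclic_code_le[OF assms(4)] unfolding per_server .
  qed (use storage_ECBC_ge \<open>r < m\<close> k_gt in blast)
  moreover have "m * ((n - t * m) + t * (r + 1)) = t * m * (r + 1) + m * (n - t * m)"
    by (simp add: add_mult_distrib2 ac_simps)
  ultimately show ?thesis unfolding per_server by simp
qed

end
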